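(* Consider the time-switching (TS) wireless powered multi-relay model described in the context, with the information beamformer (hence the matrices $\mathbf{A}$ and $\mathbf{B}$) fixed. Define $$\Omega=\Big\{(t,\gamma)\in\mathbb{R}^2 \;:\; \exists\,\mathbf{c}\in\mathbb{R}^N_{\ge 0},\ \exists\,\mathbf{W}_{\mathrm{e}}\succeq 0 \text{ such that } 0\le\gamma\le \frac{\mathbf{c}^T\mathbf{A}\mathbf{c}}{1+\mathbf{c}^T\mathbf{B}\mathbf{c}},\ t\in[0,1/2],$$ $$ c_n^2\,t\le (1-2t)\,\eta\,p_{\mathrm{o}}\,\mathbf{f}_n^H\mathbf{W}_{\mathrm{e}}\mathbf{f}_n\ \ \forall n\in\mathcal{N},\ \ \sup_{\mathbb{P}\in\mathcal{P}_m}\mathbb{P}\Big(\sum_{n\in\mathcal{N}}|z_{nm}|^2c_n^2\ge\bar\phi_m\Big)\le\zeta\ \ \forall m\in\mathcal{C}\Big\}.$$ Then $\Omega$ is normal, i.e., whenever $(t,\gamma)\in\Omega$ and $(t',\gamma')\in\mathbb{R}^2$ satisfies $0\le t'\le t$ and $0\le\gamma'\le\gamma$, we have $(t',\gamma')\in\Omega$.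
   Context: An access point (HAP) with $K$ antennas and fixed normalized transmit power $p_{\mathrm{o}}>0$ serves $N$ single-antenna relays, $\mathcal{N}=\{1,\dots,N\}$, which share spectrum with $M$ cellular users, $\mathcal{C}=\{1,\dots,M\}$. $\mathbf{f}_n\in\mathbb{C}^K$ is the channel from the HAP to relay $n$, $\mathbf{g}\in\mathbb{C}^N$ the channel from the relays to the receiver, $\eta\in(0,1]$ the energy conversion efficiency. For a fixed information beamformer $\mathbf{w}_1\in\mathbb{C}^K$, let $h_n=\mathbf{f}_n^H\mathbf{w}_1$, $\mathbf{H}=\mathrm{diag}\big(\tfrac{|h_n|^2}{1+p_{\mathrm{o}}|h_n|^2}\big)_{n}$, $\mathbf{B}=\mathrm{diag}\big(\tfrac{|g_n|^2}{1+p_{\mathrm{o}}|h_n|^2}\big)_{n}$, $\mathbf{G}=\mathbf{g}\mathbf{g}^H$, $\mathbf{A}=\mathbf{H}\mathbf{G}$. The vector $\mathbf{c}$ collects the square roots $c_n=\sqrt{p_n}$ of the relays' transmit powers, $\mathbf{W}_{\mathrm{e}}$ is the HAP's (Hermitian positive semidefinite) energy-beamforming covariance, and $t$ is the information-transmission time (the energy-harvesting time being $1-2t$). The channel $\mathbf{z}_m=(z_{1m},\dots,z_{Nm})^T\in\mathbb{C}^N$ from the relays to cellular user $m$ is random with unknown distribution; $\mathcal{P}_m$ is the set of all distributions of $\mathbf{z}_m$ with prescribed first-order moment $\mathbf{u}_m$ and second-order moment $\mathbf{S}_m$. $\bar\phi_m>0$ is the interference tolerance of cellular user $m$ and $\zeta\in(0,1)$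 the admissible violation probability. *)

theory Defs
  imports "HOL-Probability.Probability"
begin

text \<open>Index types: 'k = HAP antennas (K), 'n = relays (N), 'm = cellular users (M).\<close>

definition herm_inner :: "complex ^ 'k \<Rightarrow> complex ^ 'k \<Rightarrow> complex" where
  "herm_inner x y = (\<Sum>i\<in>UNIV. cnj (x $ i) * y $ i)"

definition herm_quad :: "complex ^ 'k ^ 'k \<Rightarrow> complex ^ 'k \<Rightarrow> complex" where
  "herm_quad W x = (\<Sum>i\<in>UNIV. \<Sum>j\<in>UNIV. cnj (x $ i) * W $ i $ j * x $ j)"

definition hermitian_psd :: "complex ^ 'k ^ 'k \<Rightarrow> bool" where
  "hermitian_psd W \<longleftrightarrow> (\<forall>i j. W $ i $ j = cnj (W $ j $ i)) \<and>
      (\<forall>x. Im (herm_quad W x) = 0 \<and> 0 \<le> Re (herm_quad W x))"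

text \<open>Diagonal entries of H and B, and the matrix A = H G with G = g g^H.\<close>
definition Hdiag :: "real \<Rightarrow> ('n \<Rightarrow> complex ^ 'k) \<Rightarrow> complex ^ 'k \<Rightarrow> 'n \<Rightarrow> real" where
  "Hdiag po f w1 n = (cmod (herm_inner (f n) w1))^2 / (1 + po * (cmod (herm_inner (f n) w1))^2)"

definition Bdiag :: "real \<Rightarrow> ('n \<Rightarrow> complex ^ 'k) \<Rightarrow> complex ^ 'k \<Rightarrow> complex ^ 'n \<Rightarrow> 'n \<Rightarrow> real" where
  "Bdiag po f w1 g n = (cmod (g $ n))^2 / (1 + po * (cmod (herm_inner (f n) w1))^2)"

definition Amat :: "real \<Rightarrow> ('n \<Rightarrow> complex ^ 'k) \<Rightarrow> complex ^ 'k \<Rightarrow> complex ^ 'n \<Rightarrow> complex ^ 'n ^ 'n" where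
  "Amat po f w1 g = (\<chi> i j. complex_of_real (Hdiag po f w1 i) * g $ i * cnj (g $ j))"

definition quadA :: "complex ^ 'n ^ 'n \<Rightarrow> real ^ 'n \<Rightarrow> real" where
  "quadA A c = Re (\<Sum>i\<in>UNIV. \<Sum>j\<in>UNIV. complex_of_real (c $ i) * A $ i $ j * complex_of_real (c $ j))"

definition quadB :: "('n \<Rightarrow> real) \<Rightarrow> real ^ 'n \<Rightarrow> real" where
  "quadB b c = (\<Sum>i\<in>UNIV. b i * (c $ i)^2)"

definition moment_set :: "complex ^ 'n \<Rightarrow> complex ^ 'n ^ 'n \<Rightarrow> (complex ^ 'n) measure set" where
  "moment_set u S = {P. prob_space P \<and> sets P = sets borel \<and>
      (\<forall>i. integrable P (\<lambda>z. z $ i) \<and> (\<integral>z. z $ i \<partial>P) = u $ i) \<and>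
      (\<forall>i j. integrable P (\<lambda>z. z $ i * cnj (z $ j)) \<and> (\<integral>z. z $ i * cnj (z $ j) \<partial>P) = S $ i $ j)}"

definition Omega ::
  "real \<Rightarrow> real \<Rightarrow> ('n \<Rightarrow> complex ^ 'k) \<Rightarrow> complex ^ 'n \<Rightarrow> complex ^ 'k
   \<Rightarrow> ('m \<Rightarrow> complex ^ 'n) \<Rightarrow> ('m \<Rightarrow> complex ^ 'n ^ 'n) \<Rightarrow> ('m \<Rightarrow> real) \<Rightarrow> real
   \<Rightarrow> (real \<times> real) set" where
  "Omega po \<eta> f g w1 u S phi \<zeta> = {(t, \<gamma>). \<exists>(c :: real ^ 'n) (We :: complex ^ 'k ^ 'k).
      (\<forall>n. 0 \<le> c $ n) \<and> hermitian_psd We \<and>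
      0 \<le> \<gamma> \<and> \<gamma> \<le> quadA (Amat po f w1 g) c / (1 + quadB (Bdiag po f w1 g) c) \<and>
      0 \<le> t \<and> t \<le> 1/2 \<and>
      (\<forall>n. (c $ n)^2 * t \<le> (1 - 2*t) * \<eta> * po * Re (herm_quad We (f n))) \<and>
      (\<forall>m. \<forall>P\<in>moment_set (u m) (S m).
          measure P {z \<in> space P. phi m \<le> (\<Sum>n\<in>UNIV. (cmod (z $ n))^2 * (c $ n)^2)} \<le> \<zeta>)}"

end

theory Submission
  imports Defs
begin

text \<open>The same relay powers c and energy covariance We witness (t', \<gamma>'): the SINR bound and the
  chance constraints do not involve t, and a shorter information phase only relaxes the
  harvesting constraint, whose left side grows and whose right side shrinks with t.\<close>

lemma hermitian_psd_quad_nonneg: "hermitian_psd W \<Longrightarrow> 0 \<le> Re (herm_quad W x)"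
  unfolding hermitian_psd_def by blast

lemma harvest_constraint_antimono:
  fixes x E t t' :: real
  assumes "0 \<le> x" and "0 \<le> E" and "t' \<le> t" and "x * t \<le> (1 - 2 * t) * E"
  shows "x * t' \<le> (1 - 2 * t') * E"
proof -
  have "x * t' \<le> x * t" using assms(1,3) by (simp add: mult_left_mono)
  also have "\<dots> \<le> (1 - 2 * t) * E" by (fact assms(4))
  also have "\<dots> \<le> (1 - 2 * t') * E" using assms(2,3) by (intro mult_right_mono) auto
  finally show ?thesis .
qed

theorem proposition1:
  fixes po \<eta> \<zeta> :: real
    and f :: "'n::finite \<Rightarrow> complex ^ 'k::finite"
    and g :: "complex ^ 'n"
    and w1 :: "complex ^ 'k"
    and u :: "'m::finite \<Rightarrow> complex ^ 'n"
    and S :: "'m \<Rightarrow> complex ^ 'n ^ 'n"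
    and phi :: "'m \<Rightarrow> real"
    and t \<gamma> t' \<gamma>' :: real
  assumes "0 < po" and "0 < \<eta>" and "\<eta> \<le> 1"
    and "\<forall>m. 0 < phi m" and "0 < \<zeta>" and "\<zeta> < 1"
    and "(t, \<gamma>) \<in> Omega po \<eta> f g w1 u S phi \<zeta>"
    and "0 \<le> t'" and "t' \<le> t" and "0 \<le> \<gamma>'" and "\<gamma>' \<le> \<gamma>"
  shows "(t', \<gamma>') \<in> Omega po \<eta> f g w1 u S phi \<zeta>"
proof -
  obtain c We where c: "\<forall>n. 0 \<le> c $ n" and We: "hermitian_psd We"
    and sinr: "\<gamma> \<le> quadA (Amat po f w1 g) c / (1 + quadB (Bdiag po f w1 g) c)"
    and t: "t \<le> 1/2"
    and harvest: "\<forall>n. (c $ n)^2 * t \<le> (1 - 2*t) * \<eta> * po * Re (herm_quad We (f n))"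
    and chance: "\<forall>m. \<forall>P\<in>moment_set (u m) (S m).
          measure P {z \<in> space P. phi m \<le> (\<Sum>n\<in>UNIV. (cmod (z $ n))^2 * (c $ n)^2)} \<le> \<zeta>"
    using assms(7) unfolding Omega_def by blast
  have "(c $ n)^2 * t' \<le> (1 - 2*t') * \<eta> * po * Re (herm_quad We (f n))" for n
  proof -
    have "0 \<le> \<eta> * po * Re (herm_quad We (f n))"
      using assms(1,2) hermitian_psd_quad_nonneg[OF We] by simp
    then show ?thesis
      using harvest_constraint_antimono[of "(c $ n)^2" _ t' t] harvest assms(9)
      by (simp add: mult.assoc)
  qed
  then show ?thesis unfolding Omega_def
    using c We sinr t chance assms(8-11) by (auto intro!: exI[of _ c] exI[of _ We])
qed

end
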